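(* Let $M$ be a finite abelian group of exponent greater than $2$ and let $g$ be a proper half-automorphism of $L_M$. Let $g'\in\mathrm{Aut}(K)$ and $u,v\in M$ (with $u^2=v^2=1$) be such that $g(A,1)=(g'(A),\alpha_{(u,v)}(A))$ for all $A\in K$, and let $g''\in\mathrm{Aut}(M)$ be defined by $g(1,x)=(1,g''(x))$ for $x\in M$ (these exist for every half-automorphism). Then $g=F^-_{(g',g'',u,v)}$.
   Context: Let $K=\{1,a,b,c\}$ be the Klein four-group. Set $L_M=K\times M$ with the operation $(A,x)*(B,y)=(AB,xy)$ if $B=1$, and $(A,x)*(B,y)=(AB,x^{-1}y)$ if $B\neq 1$. For $u,v\in M$ with $u^2=v^2=1$, $\alpha_{(u,v)}:K\to M$ is defined by $\alpha_{(u,v)}(1)=1$, $\alpha_{(u,v)}(a)=u$, $\alpha_{(u,v)}(b)=v$, $\alpha_{(u,v)}(c)=uv$. For $f'\in\mathrm{Aut}(K)$, $f''\in\mathrm{Aut}(M)$ define $F^-_{(f',f'',u,v)}(1,x)=(1,f''(x))$ and $F^-_{(f',f'',u,v)}(A,x)=(f'(A),f''(x^{-1})\alpha_{(u,v)}(A))$ for $A\neq 1$. A half-automorphism of a loop $L$ is a bijection $f:L\to L$ with $f(XY)\in\{f(X)f(Y),f(Y)f(X)\}$ for all $X,Y$; it is proper if it is neither an automorphism nor an anti-automorphism. *)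

theory Defs
  imports Main
begin

datatype K = K1 | Ka | Kb | Kc

fun kmult :: "K \<Rightarrow> K \<Rightarrow> K" where
  "kmult K1 y = y"
| "kmult x K1 = x"
| "kmult Ka Ka = K1" | "kmult Ka Kb = Kc" | "kmult Ka Kc = Kb"
| "kmult Kb Ka = Kc" | "kmult Kb Kb = K1" | "kmult Kb Kc = Ka"
| "kmult Kc Ka = Kb" | "kmult Kc Kb = Ka" | "kmult Kc Kc = K1"

definition autK :: "(K \<Rightarrow> K) \<Rightarrow> bool" where
  "autK f \<longleftrightarrow> bij f \<and> (\<forall>x y. f (kmult x y) = kmult (f x) (f y))"

text \<open>The abelian group M is written additively (identity 0, inverse uminus).\<close>
definition autM :: "('m::ab_group_add \<Rightarrow> 'm) \<Rightarrow> bool" where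
  "autM f \<longleftrightarrow> bij f \<and> (\<forall>x y. f (x + y) = f x + f y)"

definition grp_exponent :: "'m::ab_group_add itself \<Rightarrow> nat" where
  "grp_exponent _ = (LEAST n. 0 < n \<and> (\<forall>x::'m. (((+) x) ^^ n) 0 = 0))"

definition LM_mult :: "K \<times> 'm::ab_group_add \<Rightarrow> K \<times> 'm \<Rightarrow> K \<times> 'm" where
  "LM_mult X Y = (case X of (A, x) \<Rightarrow> case Y of (B, y) \<Rightarrow>
     if B = K1 then (kmult A B, x + y) else (kmult A B, - x + y))"

definition half_aut :: "(K \<times> 'm::ab_group_add \<Rightarrow> K \<times> 'm) \<Rightarrow> bool" where
  "half_aut f \<longleftrightarrow> bij f \<and>
     (\<forall>X Y. f (LM_mult X Y) \<in> {LM_mult (f X) (f Y), LM_mult (f Y) (f X)})"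

definition loop_aut :: "(K \<times> 'm::ab_group_add \<Rightarrow> K \<times> 'm) \<Rightarrow> bool" where
  "loop_aut f \<longleftrightarrow> bij f \<and> (\<forall>X Y. f (LM_mult X Y) = LM_mult (f X) (f Y))"

definition loop_antiaut :: "(K \<times> 'm::ab_group_add \<Rightarrow> K \<times> 'm) \<Rightarrow> bool" where
  "loop_antiaut f \<longleftrightarrow> bij f \<and> (\<forall>X Y. f (LM_mult X Y) = LM_mult (f Y) (f X))"

definition proper_half_aut :: "(K \<times> 'm::ab_group_add \<Rightarrow> K \<times> 'm) \<Rightarrow> bool" where
  "proper_half_aut f \<longleftrightarrow> half_aut f \<and> \<not> loop_aut f \<and> \<not> loop_antiaut f"

definition alpha :: "'m::ab_group_add \<Rightarrow> 'm \<Rightarrow> K \<Rightarrow> 'm" where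
  "alpha u v A = (case A of K1 \<Rightarrow> 0 | Ka \<Rightarrow> u | Kb \<Rightarrow> v | Kc \<Rightarrow> u + v)"

definition Fminus :: "(K \<Rightarrow> K) \<Rightarrow> ('m::ab_group_add \<Rightarrow> 'm) \<Rightarrow> 'm \<Rightarrow> 'm \<Rightarrow> K \<times> 'm \<Rightarrow> K \<times> 'm" where
  "Fminus f' f'' u v X = (case X of (A, x) \<Rightarrow>
     if A = K1 then (K1, f'' x) else (f' A, f'' (- x) + alpha u v A))"

end

theory Submission
  imports Defs
begin

text \<open>On each coset \<open>A \<noteq> 1\<close> a half-automorphism \<open>g\<close> acts on the \<open>M\<close>-coordinate either
  as \<open>x \<mapsto> g''(x) + \<alpha>(A)\<close> or as \<open>x \<mapsto> g''(-x) + \<alpha>(A)\<close>, because \<open>(A,x) = (A,0)(1,x)\<close>.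
  Once one \<open>x\<close> with \<open>2 g''(x) \<noteq> 0\<close> is seen to follow the first rule, the factorisation
  \<open>(A,z) = (A,x)(1,z-x)\<close> forces the first rule on the whole coset.  Two nontrivial cosets
  following different rules are incompatible with \<open>(AB,0) = (A,e)(B,e)\<close> unless \<open>M\<close> has
  exponent 2.  So all three cosets follow the same rule: the second one gives \<open>F\<^sup>-\<close>,
  the first one makes \<open>g\<close> an automorphism, which a proper half-automorphism is not.\<close>

lemma alpha_kmult:
  fixes u v :: "'m::ab_group_add"
  assumes u: "u + u = 0" and v: "v + v = 0"
  shows "alpha u v (kmult A B) = alpha u v A + alpha u v B"
proof -
  have "u + (u + v) = v" "v + (u + v) = u" "u + v + u = v" "u + v + v = u" "u + v + (u + v) = 0"
    by (simp_all add: add.assoc[symmetric] u)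
      (simp_all add: add.commute add.left_commute u v add.assoc[symmetric])
  then show ?thesis
    by (cases A; cases B) (simp_all add: alpha_def u v add.commute)
qed

lemma alpha_add_self:
  fixes u v :: "'m::ab_group_add"
  assumes "u + u = 0" "v + v = 0"
  shows "alpha u v A + alpha u v A = 0"
  using alpha_kmult[OF assms, of A A] by (cases A) (simp_all add: alpha_def)

lemma uminus_alpha:
  fixes u v :: "'m::ab_group_add"
  assumes "u + u = 0" "v + v = 0"
  shows "- alpha u v A = alpha u v A"
  using alpha_add_self[OF assms] by (metis add_eq_0_iff)

lemma kmult_K1_right [simp]: "kmult A K1 = A"
  by (cases A) auto

lemma kmult_self [simp]: "kmult A A = K1"
  by (cases A) auto

lemma autK_K1: "autK f \<Longrightarrow> f K1 = K1"
  unfolding autK_def by (metis kmult.simps(1) kmult_self)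

lemma autK_eq_K1_iff: "autK f \<Longrightarrow> f A = K1 \<longleftrightarrow> A = K1"
  using autK_K1 unfolding autK_def bij_def by (metis injD)

lemma autM_uminus: "autM f \<Longrightarrow> f (- x) = - f x"
  unfolding autM_def by (metis add.right_inverse add_cancel_right_left eq_neg_iff_add_eq_0)

lemma exists_double_nonzero:
  assumes "grp_exponent TYPE('m::ab_group_add) > 2"
  shows "\<exists>x::'m. x + x \<noteq> 0"
proof (rule ccontr)
  assume "\<not> ?thesis"
  then have "(0::nat) < 2 \<and> (\<forall>x::'m. (((+) x) ^^ 2) 0 = 0)"
    by (simp add: numeral_2_eq_2)
  then have "grp_exponent TYPE('m) \<le> 2"
    unfolding grp_exponent_def by (rule Least_le)
  with assms show False by simp
qed

definition Fplus :: "(K \<Rightarrow> K) \<Rightarrow> ('m::ab_group_add \<Rightarrow> 'm) \<Rightarrow> 'm \<Rightarrow> 'm \<Rightarrow> K \<times> 'm \<Rightarrow> K \<times> 'm" where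
  "Fplus f' f'' u v X = (case X of (A, x) \<Rightarrow> (f' A, f'' x + alpha u v A))"

lemma Fplus_LM_mult:
  assumes "autK f'" "autM f''" "u + u = 0" "v + v = 0"
  shows "Fplus f' f'' u v (LM_mult X Y) = LM_mult (Fplus f' f'' u v X) (Fplus f' f'' u v Y)"
proof -
  obtain A x B y where XY: "X = (A, x)" "Y = (B, y)" by (cases X, cases Y)
  have f'_hom: "f' (kmult A B) = kmult (f' A) (f' B)"
    using assms(1) by (simp add: autK_def)
  have f''_add: "f'' (s + t) = f'' s + f'' t" for s t
    using assms(2) by (simp add: autM_def)
  have alpha0: "alpha u v K1 = 0"
    by (simp add: alpha_def)
  show ?thesis
  proof (cases "B = K1")
    case True
    then show ?thesis
      by (simp add: XY Fplus_def LM_mult_def autK_K1[OF assms(1)] f''_add alpha0 algebra_simps)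
  next
    case False
    then have "f' B \<noteq> K1" using autK_eq_K1_iff[OF assms(1)] by simp
    have "f'' (- x + y) = - f'' x + f'' y"
      by (metis f''_add autM_uminus[OF assms(2)])
    moreover have "alpha u v (kmult A B) = - alpha u v A + alpha u v B"
      by (simp add: alpha_kmult[OF assms(3,4)] uminus_alpha[OF assms(3,4)])
    ultimately have "f'' (- x + y) + alpha u v (kmult A B) = - (f'' x + alpha u v A) + (f'' y + alpha u v B)"
      by (simp add: algebra_simps)
    with False \<open>f' B \<noteq> K1\<close> show ?thesis
      by (simp add: XY Fplus_def LM_mult_def f'_hom)
  qed
qed

locale half_aut_with_axes =
  fixes g :: "K \<times> 'm::ab_group_add \<Rightarrow> K \<times> 'm"
    and g' :: "K \<Rightarrow> K" and g'' :: "'m \<Rightarrow> 'm" and u v :: 'm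
  assumes half_aut: "half_aut g"
    and autK: "autK g'" and autM: "autM g''"
    and u2: "u + u = 0" and v2: "v + v = 0"
    and g_K: "g (A, 0) = (g' A, alpha u v A)"
    and g_M: "g (K1, x) = (K1, g'' x)"
begin

abbreviation "\<alpha> \<equiv> alpha u v"

definition plus_on :: "K \<Rightarrow> bool" where
  "plus_on A \<longleftrightarrow> (\<forall>x. g (A, x) = (g' A, g'' x + \<alpha> A))"

definition minus_on :: "K \<Rightarrow> bool" where
  "minus_on A \<longleftrightarrow> (\<forall>x. g (A, x) = (g' A, - g'' x + \<alpha> A))"

lemma g_LM_mult_cases: "g (LM_mult X Y) = LM_mult (g X) (g Y) \<or> g (LM_mult X Y) = LM_mult (g Y) (g X)"
  using half_aut unfolding half_aut_def by blast

lemma g''_add: "g'' (x + y) = g'' x + g'' y"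
  using autM by (simp add: autM_def)

lemma g''_diff: "g'' (z - x) = g'' z - g'' x"
  using g''_add[of z "- x"] autM_uminus[OF autM] by simp

lemma g'_neq_K1: "A \<noteq> K1 \<Longrightarrow> g' A \<noteq> K1"
  using autK_eq_K1_iff[OF autK] by simp

lemma g_coset_cases:
  assumes "A \<noteq> K1"
  shows "g (A, x) = (g' A, g'' x + \<alpha> A) \<or> g (A, x) = (g' A, - g'' x + \<alpha> A)"
proof -
  have "LM_mult (A, 0) (K1, x) = (A, x)" by (simp add: LM_mult_def)
  then show ?thesis
    using g_LM_mult_cases[of "(A, 0)" "(K1, x)"] g'_neq_K1[OF assms]
    by (auto simp: g_K g_M LM_mult_def add.commute)
qed

lemma g_coset_plus_propagates:
  assumes "A \<noteq> K1" and gx: "g (A, x) = (g' A, g'' x + \<alpha> A)" and "g'' x + g'' x \<noteq> 0"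
  shows "g (A, z) = (g' A, g'' z + \<alpha> A)"
proof -
  have "LM_mult (A, x) (K1, z - x) = (A, z)" by (simp add: LM_mult_def)
  then have "g (A, z) = (g' A, g'' x + \<alpha> A + (g'' z - g'' x))
      \<or> g (A, z) = (g' A, - (g'' z - g'' x) + (g'' x + \<alpha> A))"
    using g_LM_mult_cases[of "(A, x)" "(K1, z - x)"] g'_neq_K1[OF assms(1)]
    by (auto simp: gx g_M g''_diff LM_mult_def)
  then show ?thesis
  proof
    assume "g (A, z) = (g' A, - (g'' z - g'' x) + (g'' x + \<alpha> A))"
    moreover have "g (A, z) = (g' A, - g'' z + \<alpha> A)" if "g (A, z) \<noteq> (g' A, g'' z + \<alpha> A)"
      using g_coset_cases[OF assms(1), of z] that by blast
    ultimately show ?thesis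
      using assms(3) by (force simp: algebra_simps)
  qed (simp add: algebra_simps)
qed

lemma plus_on_or_minus_on:
  assumes "A \<noteq> K1"
  shows "plus_on A \<or> minus_on A"
proof (cases "minus_on A")
  case False
  then obtain x where x: "g (A, x) \<noteq> (g' A, - g'' x + \<alpha> A)"
    by (auto simp: minus_on_def)
  then have gx: "g (A, x) = (g' A, g'' x + \<alpha> A)"
    using g_coset_cases[OF assms] by blast
  with x have "g'' x + g'' x \<noteq> 0"
    by (metis add_eq_0_iff)
  have "g (A, z) = (g' A, g'' z + \<alpha> A)" for z
  proof (cases "g'' z + g'' z = 0")
    case True
    then have "- g'' z = g'' z" by (metis add_eq_0_iff)
    then show ?thesis using g_coset_cases[OF assms, of z] by auto
  qed (use g_coset_plus_propagates[OF assms gx \<open>g'' x + g'' x \<noteq> 0\<close>] in simp)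
  then show ?thesis by (simp add: plus_on_def)
qed simp

lemma mixed_signs_imp_exponent_two:
  assumes "A \<noteq> K1" "B \<noteq> K1" "A \<noteq> B" "plus_on A" "minus_on B"
  shows "(y::'m) + y = 0"
proof -
  obtain e where e: "g'' e = y"
    using autM by (metis autM_def bij_pointE)
  have "LM_mult (A, e) (B, e) = (kmult A B, 0)" using assms(2) by (simp add: LM_mult_def)
  then have "(g' (kmult A B), \<alpha> (kmult A B)) = (kmult (g' A) (g' B), - (y + \<alpha> A) + (- y + \<alpha> B))
      \<or> (g' (kmult A B), \<alpha> (kmult A B)) = (kmult (g' B) (g' A), - (- y + \<alpha> B) + (y + \<alpha> A))"
    using g_LM_mult_cases[of "(A, e)" "(B, e)"] assms(4,5) e g'_neq_K1[OF assms(1)] g'_neq_K1[OF assms(2)]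
    by (auto simp: g_K plus_on_def minus_on_def LM_mult_def)
  then have "\<alpha> A + \<alpha> B = - (y + \<alpha> A) + (- y + \<alpha> B) \<or> \<alpha> A + \<alpha> B = - (- y + \<alpha> B) + (y + \<alpha> A)"
    by (auto simp: alpha_kmult[OF u2 v2])
  moreover have "- (y + \<alpha> A) + (- y + \<alpha> B) = - (y + y) + (\<alpha> A + \<alpha> B)"
    by (simp only: minus_add_distrib uminus_alpha[OF u2 v2]) (simp add: algebra_simps)
  moreover have "- (- y + \<alpha> B) + (y + \<alpha> A) = (y + y) + (\<alpha> A + \<alpha> B)"
    by (simp only: minus_add_distrib minus_minus uminus_alpha[OF u2 v2]) (simp add: algebra_simps)
  ultimately show ?thesis
    by (metis add_cancel_left_left neg_equal_0_iff_equal)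
qed

lemma signs_agree:
  assumes "\<exists>y::'m. y + y \<noteq> 0"
  shows "(\<forall>A. A \<noteq> K1 \<longrightarrow> minus_on A) \<or> (\<forall>A. A \<noteq> K1 \<longrightarrow> plus_on A)"
proof -
  have minus_on_transfer: "minus_on B" if A: "A \<noteq> K1" "minus_on A" and B: "B \<noteq> K1" for A B
  proof (rule ccontr)
    assume "\<not> minus_on B"
    then have "A \<noteq> B" "plus_on B" using A plus_on_or_minus_on[OF B(1)] by auto
    then show False
      using mixed_signs_imp_exponent_two[OF B(1) A(1)] A(2) assms by blast
  qed
  show ?thesis
  proof (cases "minus_on Ka")
    case True
    then show ?thesis using minus_on_transfer[of Ka] by blast
  next
    case False
    then show ?thesis using minus_on_transfer[of _ Ka] plus_on_or_minus_on by blast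
  qed
qed

lemma minus_on_imp_eq_Fminus:
  assumes "\<forall>A. A \<noteq> K1 \<longrightarrow> minus_on A"
  shows "g = Fminus g' g'' u v"
  using assms by (intro ext)
    (auto simp: Fminus_def minus_on_def g_M autM_uminus[OF autM] split: prod.splits)

lemma plus_on_imp_loop_aut:
  assumes "\<forall>A. A \<noteq> K1 \<longrightarrow> plus_on A"
  shows "loop_aut g"
proof -
  have "g (A, x) = Fplus g' g'' u v (A, x)" for A x
    using assms autK_K1[OF autK]
    by (cases "A = K1") (auto simp: Fplus_def plus_on_def g_M alpha_def)
  then have "g = Fplus g' g'' u v" by auto
  then show ?thesis
    using half_aut Fplus_LM_mult[OF autK autM u2 v2] by (simp add: loop_aut_def half_aut_def)
qed

end

theorem proposition4p12:
  fixes g :: "K \<times> ('m::{ab_group_add, finite}) \<Rightarrow> K \<times> 'm"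
    and g' :: "K \<Rightarrow> K" and g'' :: "'m \<Rightarrow> 'm" and u v :: 'm
  assumes "grp_exponent TYPE('m) > 2"
    and "proper_half_aut g"
    and "autK g'"
    and "u + u = 0" and "v + v = 0"
    and "\<forall>A. g (A, 0) = (g' A, alpha u v A)"
    and "autM g''"
    and "\<forall>x. g (K1, x) = (K1, g'' x)"
  shows "g = Fminus g' g'' u v"
proof -
  interpret half_aut_with_axes g g' g'' u v
    using assms(2-8) by unfold_locales (auto simp: proper_half_aut_def)
  have "\<not> loop_aut g"
    using assms(2) by (simp add: proper_half_aut_def)
  then show ?thesis
    using signs_agree[OF exists_double_nonzero[OF assms(1)]]
      plus_on_imp_loop_aut minus_on_imp_eq_Fminus by blast
qed

end
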